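(* There exist differentiable functions $f_1,f_2:\mathbb{R}\to\mathbb{R}$ such that $f=\frac12(f_1+f_2)$ is bounded from below and has $1$-Lipschitz derivative, and such that for the stochastic gradient $g(x)=f_i'(x)$, where $i$ is drawn uniformly at random from $\{1,2\}$ (so $\mathbb{E}[g(x)]=f'(x)$), there are no constants $\alpha,\beta\ge 0$ with $\mathbb{E}|g(x)|^2\le \alpha |f'(x)|^2+\beta$ for all $x\in\mathbb{R}$.
   Context: The inequality $\mathbb{E}|g(x)|^2\le\alpha|f'(x)|^2+\beta$ for all $x$ is called the relaxed growth condition. *)

theory Defs
  imports "HOL-Analysis.Analysis"
begin

end

theory Submission
  imports Defs
begin

(* Take f1 x = x^2 and f2 x = -x^2. Their average f is identically zero, so it is bounded below
   with 0-Lipschitz derivative, and the right-hand side of the relaxed growth condition collapses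
   to the constant beta; but the second moment of g is 4 x^2, which is unbounded. *)

lemma deriv_power2: "deriv (\<lambda>x::real. x\<^sup>2) x = 2 * x"
  by (rule DERIV_imp_deriv) (auto intro!: derivative_eq_intros)

lemma deriv_minus_power2: "deriv (\<lambda>x::real. - x\<^sup>2) x = - 2 * x"
  by (rule DERIV_imp_deriv) (auto intro!: derivative_eq_intros)

lemma not_bdd_above_scaled_power2:
  fixes c :: real
  assumes "c > 0"
  shows "\<not> bdd_above (range (\<lambda>x. c * x\<^sup>2))"
proof
  assume "bdd_above (range (\<lambda>x. c * x\<^sup>2))"
  then obtain b where "\<And>x. c * x\<^sup>2 \<le> b"
    by (auto simp: bdd_above_def)
  from this[of "sqrt ((\<bar>b\<bar> + 1) / c)"] show False
    using assms by simp
qed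

theorem proposition1:
  shows "\<exists>f1 f2 :: real \<Rightarrow> real.
    (\<forall>x. f1 differentiable (at x)) \<and> (\<forall>x. f2 differentiable (at x)) \<and>
    (let f = (\<lambda>x. (f1 x + f2 x) / 2) in
      bdd_below (range f) \<and>
      (\<forall>x y. \<bar>deriv f x - deriv f y\<bar> \<le> 1 * \<bar>x - y\<bar>) \<and>
      \<not> (\<exists>\<alpha> \<beta>. \<alpha> \<ge> 0 \<and> \<beta> \<ge> 0 \<and>
            (\<forall>x. ((deriv f1 x)\<^sup>2 + (deriv f2 x)\<^sup>2) / 2 \<le> \<alpha> * (deriv f x)\<^sup>2 + \<beta>)))"
proof (rule exI[of _ "\<lambda>x. x\<^sup>2"], rule exI[of _ "\<lambda>x. - x\<^sup>2"], intro conjI)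
  show "\<forall>x. (\<lambda>x::real. x\<^sup>2) differentiable (at x)"
    and "\<forall>x. (\<lambda>x::real. - x\<^sup>2) differentiable (at x)"
    by (auto intro!: derivative_intros)
  have average_zero: "(\<lambda>x::real. (x\<^sup>2 + - x\<^sup>2) / 2) = (\<lambda>x. 0)"
    by simp
  have second_moment: "((2 * x)\<^sup>2 + (- 2 * x)\<^sup>2) / 2 = 4 * x\<^sup>2" for x :: real
    by (simp add: power_mult_distrib)
  have "\<not> bdd_above (range (\<lambda>x::real. 4 * x\<^sup>2))"
    by (rule not_bdd_above_scaled_power2) simp
  then show "let f = (\<lambda>x. ((\<lambda>x::real. x\<^sup>2) x + (\<lambda>x. - x\<^sup>2) x) / 2) in
      bdd_below (range f) \<and>
      (\<forall>x y. \<bar>deriv f x - deriv f y\<bar> \<le> 1 * \<bar>x - y\<bar>) \<and>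
      \<not> (\<exists>\<alpha> \<beta>. \<alpha> \<ge> 0 \<and> \<beta> \<ge> 0 \<and>
            (\<forall>x. ((deriv (\<lambda>x. x\<^sup>2) x)\<^sup>2 + (deriv (\<lambda>x. - x\<^sup>2) x)\<^sup>2) / 2
                 \<le> \<alpha> * (deriv f x)\<^sup>2 + \<beta>))"
    unfolding Let_def average_zero deriv_power2 deriv_minus_power2 second_moment
    by (auto simp: bdd_above_def)
qed

end
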